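(* In the setting of the interior permanent magnet synchronous machine model (state $x=(i_{s\alpha},i_{s\beta},\omega,\theta)^T$, $\frac{d}{dt}\big(L(\theta)i_{s\alpha\beta}+\psi_r(\cos\theta,\sin\theta)^T\big)=v-R_si_{s\alpha\beta}$, $\dot\omega=0$, $\dot\theta=\omega$, which includes the surface PMSM $L_\Delta=0$ and the synchronous reluctance machine $\psi_r=0$), define the observability vector $\Psi_{\mathcal{O}}=(\Psi_{\mathcal{O}d},\Psi_{\mathcal{O}q})$ in rotor coordinates by $$\Psi_{\mathcal{O}d}=L_\Delta i_{sd}+\psi_r,\qquad \Psi_{\mathcal{O}q}=L_\Delta i_{sq},$$ and, when $\Psi_{\mathcal{O}}\neq0$, let $\theta_{\mathcal{O}}$ be its polar angle, so $\frac{d\theta_{\mathcal{O}}}{dt}=\frac{\Psi_{\mathcal{O}d}\dot\Psi_{\mathcal{O}q}-\Psi_{\mathcal{O}q}\dot\Psi_{\mathcal{O}d}}{\Psi_{\mathcal{O}d}^2+\Psi_{\mathcal{O}q}^2}$ (derivatives along the model). Then the $4\times4$ observability matrix $\mathcal{O}(x)$ (rows: gradients in $x$ of $i_{s\alpha},i_{s\beta},\mathcal{L}_fi_{s\alpha},\mathcal{L}_fi_{s\beta}$) satisfies $$\det\mathcal{O}(x)=\frac{\Psi_{\mathcal{O}d}^2+\Psi_{\mathcal{O}q}^2}{L_dL_q}\Big(\omega-\frac{d\theta_{\mathcal{O}}}{dt}\Big)\quad\text{when }\Psi_{\mathcal{O}}\ne0,\qquad \det\mathcal{O}(x)=0\quad\text{when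 }\Psi_{\mathcal{O}}=0.$$ Consequently, the observability rank condition holds at $x$ (and hence the machine is locally weakly observable there) if and only if $\Psi_{\mathcal{O}}\neq0$ and $\frac{d\theta_{\mathcal{O}}}{dt}\neq\omega$.
   Context: $L(\theta)=\begin{bmatrix}L_0+L_2\cos2\theta & L_2\sin2\theta\\ L_2\sin2\theta & L_0-L_2\cos2\theta\end{bmatrix}$, $L_d=L_0+L_2>0$, $L_q=L_0-L_2>0$, $L_\Delta=L_d-L_q$; $i_{sd},i_{sq}$ are given by $\begin{bmatrix}i_{s\alpha}\\ i_{s\beta}\end{bmatrix}=\begin{bmatrix}\cos\theta&-\sin\theta\\ \sin\theta&\cos\theta\end{bmatrix}\begin{bmatrix}i_{sd}\\ i_{sq}\end{bmatrix}$. The Lie derivative $\mathcal{L}_fh=\frac{\partial h}{\partial x}f(x,u)$. The observability rank condition at $x_0$ (nonsingularity of the observability matrix at $x_0$) implies local weak observability at $x_0$. *)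

theory Defs
  imports "HOL-Analysis.Analysis"
begin

text \<open>IPMSM model. State x = (i_alpha, i_beta, omega, theta) :: real^4, input v :: real^2.
  Parameters: L0, L2 (inductances), Rs (stator resistance), psi_r (rotor flux).\<close>

definition Ld :: "real \<Rightarrow> real \<Rightarrow> real" where "Ld L0 L2 = L0 + L2"
definition Lq :: "real \<Rightarrow> real \<Rightarrow> real" where "Lq L0 L2 = L0 - L2"

definition Lmat :: "real \<Rightarrow> real \<Rightarrow> real \<Rightarrow> real^2^2" where
  "Lmat L0 L2 th = vector [vector [L0 + L2 * cos (2*th), L2 * sin (2*th)],
                            vector [L2 * sin (2*th), L0 - L2 * cos (2*th)]]"

definition flux :: "real \<Rightarrow> real \<Rightarrow> real \<Rightarrow> real^2 \<Rightarrow> real \<Rightarrow> real^2" where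
  "flux L0 L2 psi i th = Lmat L0 L2 th *v i + psi *\<^sub>R vector [cos th, sin th]"

definition stator_current :: "real^4 \<Rightarrow> real^2" where
  "stator_current x = vector [x$1, x$2]"

text \<open>Vector field f(x,v): from d/dt flux(i,theta) = v - Rs i, i.e.
  L(theta) di/dt + omega * (d flux/d theta) = v - Rs i, together with
  d omega/dt = 0, d theta/dt = omega.\<close>
definition fvec :: "real \<Rightarrow> real \<Rightarrow> real \<Rightarrow> real \<Rightarrow> real^4 \<Rightarrow> real^2 \<Rightarrow> real^4" where
  "fvec L0 L2 Rs psi x v =
    (let i = stator_current x; w = x$3; th = x$4;
         di = matrix_inv (Lmat L0 L2 th) *v
                (v - Rs *\<^sub>R i - w *\<^sub>R vector_derivative (\<lambda>t. flux L0 L2 psi i t) (at th))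
     in vector [di$1, di$2, 0, w])"

definition lie_deriv :: "(real^4 \<Rightarrow> real^2 \<Rightarrow> real^4) \<Rightarrow> real^2 \<Rightarrow> (real^4 \<Rightarrow> real) \<Rightarrow> real^4 \<Rightarrow> real" where
  "lie_deriv f v h x = frechet_derivative h (at x) (f x v)"

definition grad :: "(real^4 \<Rightarrow> real) \<Rightarrow> real^4 \<Rightarrow> real^4" where
  "grad h x = (\<chi> j. frechet_derivative h (at x) (axis j 1))"

definition h_alpha :: "real^4 \<Rightarrow> real" where "h_alpha x = x$1"
definition h_beta :: "real^4 \<Rightarrow> real" where "h_beta x = x$2"

definition obs_matrix :: "real \<Rightarrow> real \<Rightarrow> real \<Rightarrow> real \<Rightarrow> real^2 \<Rightarrow> real^4 \<Rightarrow> real^4^4" where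
  "obs_matrix L0 L2 Rs psi v x =
     vector [grad h_alpha x, grad h_beta x,
             grad (lie_deriv (fvec L0 L2 Rs psi) v h_alpha) x,
             grad (lie_deriv (fvec L0 L2 Rs psi) v h_beta) x]"

definition i_sd :: "real^4 \<Rightarrow> real" where "i_sd x = cos (x$4) * x$1 + sin (x$4) * x$2"
definition i_sq :: "real^4 \<Rightarrow> real" where "i_sq x = - sin (x$4) * x$1 + cos (x$4) * x$2"

definition PsiOd :: "real \<Rightarrow> real \<Rightarrow> real \<Rightarrow> real^4 \<Rightarrow> real" where
  "PsiOd L0 L2 psi x = (Ld L0 L2 - Lq L0 L2) * i_sd x + psi"
definition PsiOq :: "real \<Rightarrow> real \<Rightarrow> real^4 \<Rightarrow> real" where
  "PsiOq L0 L2 x = (Ld L0 L2 - Lq L0 L2) * i_sq x"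

definition dthetaO :: "real \<Rightarrow> real \<Rightarrow> real \<Rightarrow> real \<Rightarrow> real^2 \<Rightarrow> real^4 \<Rightarrow> real" where
  "dthetaO L0 L2 Rs psi v x =
     (let d = PsiOd L0 L2 psi x; q = PsiOq L0 L2 x;
          dd = lie_deriv (fvec L0 L2 Rs psi) v (PsiOd L0 L2 psi) x;
          dq = lie_deriv (fvec L0 L2 Rs psi) v (PsiOq L0 L2) x
      in (d * dq - q * dd) / (d\<^sup>2 + q\<^sup>2))"

end

theory Submission
  imports Defs
begin

text \<open>The first two rows of the observability matrix are unit vectors, so its determinant is the
  minor \<open>\<partial>(di\<^sub>\<alpha>/dt, di\<^sub>\<beta>/dt) / \<partial>(\<omega>, \<theta>)\<close>. With the explicit inverse of \<open>L(\<theta>)\<close>, this minor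
  and the Lie derivatives of \<open>\<Psi>\<^sub>O\<close> become polynomials in \<open>cos \<theta>, sin \<theta>\<close>, and modulo
  \<open>cos\<^sup>2 \<theta> + sin\<^sup>2 \<theta> = 1\<close> the minor times \<open>L\<^sub>d L\<^sub>q\<close> equals \<open>\<omega> |\<Psi>\<^sub>O|\<^sup>2 - (\<Psi>\<^sub>O\<^sub>d \<Psi>\<^sub>O\<^sub>q' - \<Psi>\<^sub>O\<^sub>q \<Psi>\<^sub>O\<^sub>d')\<close>.
  The bracket is \<open>|\<Psi>\<^sub>O|\<^sup>2 d\<theta>\<^sub>O/dt\<close>, which gives both the formula and the rank criterion.\<close>

lemma det_4_unit_first_rows:
  fixes A :: "'a::comm_ring_1^4^4"
  assumes "\<And>j. A$1$j = (if j = 1 then 1 else 0)" and "\<And>j. A$2$j = (if j = 2 then 1 else 0)"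
  shows "det A = A$3$3 * A$4$4 - A$3$4 * A$4$3"
proof -
  have f1: "finite {2::4, 3, 4}" "1 \<notin> {2::4, 3, 4}" by auto
  have f2: "finite {3::4, 4}" "2 \<notin> {3::4, 4}" by auto
  have f3: "finite {4::4}" "3 \<notin> {4::4}" by auto
  have "det A = (\<Sum>p\<in>{p. p permutes {1::4, 2, 3, 4}}. of_int (sign p) * (\<Prod>i\<in>{1::4, 2, 3, 4}. A $ i $ p i))"
    unfolding det_def UNIV_4 ..
  also have "\<dots> = A$3$3 * A$4$4 - A$3$4 * A$4$3"
    unfolding sum_over_permutations_insert[OF f1] sum_over_permutations_insert[OF f2]
      sum_over_permutations_insert[OF f3] permutes_sing
    by (simp add: assms sign_swap_id permutation_swap_id sign_compose sign_id swap_id_eq)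
  finally show ?thesis .
qed

lemma vector_4 [simp]:
  "(vector [a, b, c, d] :: ('a::zero)^4)$1 = a"
  "(vector [a, b, c, d] :: ('a::zero)^4)$2 = b"
  "(vector [a, b, c, d] :: ('a::zero)^4)$3 = c"
  "(vector [a, b, c, d] :: ('a::zero)^4)$4 = d"
  unfolding vector_def by simp_all

lemma has_derivative_vec_nth [derivative_intros]:
  "(g has_derivative g') F \<Longrightarrow> ((\<lambda>x. g x $ i) has_derivative (\<lambda>h. g' h $ i)) F"
  by (rule bounded_linear.has_derivative[OF bounded_linear_vec_nth])

lemma frechet_derivative_vec_nth: "frechet_derivative (\<lambda>x. x $ i) (at y) = (\<lambda>h. h $ i)"
  by (rule frechet_derivative_at[symmetric]) (rule has_derivative_vec_nth[OF has_derivative_ident])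

lemma matrix_inv_unique:
  fixes A :: "'a::semiring_1^'n^'m" and B :: "'a^'m^'n"
  assumes AB: "A ** B = mat 1" and BA: "B ** A = mat 1"
  shows "matrix_inv A = B"
proof -
  define C where "C = matrix_inv A"
  have "\<exists>A'. A ** A' = mat 1 \<and> A' ** A = mat 1" using AB BA by blast
  then have C: "C ** A = mat 1"
    unfolding C_def matrix_inv_def by (rule someI2_ex) blast
  have "C = C ** (A ** B)" using AB by simp
  also have "\<dots> = B" using C by (simp add: matrix_mul_assoc)
  finally show ?thesis unfolding C_def .
qed

lemma Ld_mult_Lq: "Ld L0 L2 * Lq L0 L2 = L0\<^sup>2 - L2\<^sup>2"
  by (simp add: Ld_def Lq_def power2_eq_square algebra_simps)

definition Lmat_inv :: "real \<Rightarrow> real \<Rightarrow> real \<Rightarrow> real^2^2" where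
  "Lmat_inv L0 L2 th =
     vector [vector [(L0 - L2 * cos (2*th)) / (L0\<^sup>2 - L2\<^sup>2), - L2 * sin (2*th) / (L0\<^sup>2 - L2\<^sup>2)],
             vector [- L2 * sin (2*th) / (L0\<^sup>2 - L2\<^sup>2), (L0 + L2 * cos (2*th)) / (L0\<^sup>2 - L2\<^sup>2)]]"

lemma matrix_inv_Lmat:
  assumes "L0\<^sup>2 - L2\<^sup>2 \<noteq> 0"
  shows "matrix_inv (Lmat L0 L2 th) = Lmat_inv L0 L2 th"
proof (rule matrix_inv_unique)
  have sin2: "(sin (th*2))\<^sup>2 = 1 - (cos (th*2))\<^sup>2" by (simp add: sin_squared_eq)
  show "Lmat L0 L2 th ** Lmat_inv L0 L2 th = mat 1" "Lmat_inv L0 L2 th ** Lmat L0 L2 th = mat 1"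
    using assms
    by (simp add: vec_eq_iff forall_2 matrix_matrix_mult_def UNIV_2 Lmat_def Lmat_inv_def mat_def
        divide_simps; simp add: algebra_simps power2_eq_square[symmetric] sin2)+
qed

definition flux_dtheta1 :: "real \<Rightarrow> real \<Rightarrow> real \<Rightarrow> real \<Rightarrow> real \<Rightarrow> real" where
  "flux_dtheta1 L2 psi i1 i2 th = - 2 * L2 * sin (2*th) * i1 + 2 * L2 * cos (2*th) * i2 - psi * sin th"

definition flux_dtheta2 :: "real \<Rightarrow> real \<Rightarrow> real \<Rightarrow> real \<Rightarrow> real \<Rightarrow> real" where
  "flux_dtheta2 L2 psi i1 i2 th = 2 * L2 * cos (2*th) * i1 + 2 * L2 * sin (2*th) * i2 + psi * cos th"

lemma vector_derivative_flux:
  "vector_derivative (\<lambda>t. flux L0 L2 psi i t) (at th) =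
     vector [flux_dtheta1 L2 psi (i$1) (i$2) th, flux_dtheta2 L2 psi (i$1) (i$2) th]"
proof (rule vector_derivative_at)
  have flux_axes: "(\<lambda>t. flux L0 L2 psi i t) = (\<lambda>t.
        ((L0 + L2 * cos (2*t)) * i$1 + L2 * sin (2*t) * i$2 + psi * cos t) *\<^sub>R (axis 1 1 :: real^2)
      + (L2 * sin (2*t) * i$1 + (L0 - L2 * cos (2*t)) * i$2 + psi * sin t) *\<^sub>R (axis 2 1 :: real^2))"
    by (rule ext) (simp add: flux_def Lmat_def vec_eq_iff forall_2 matrix_vector_mult_def UNIV_2 axis_def)
  show "((\<lambda>t. flux L0 L2 psi i t) has_vector_derivative
          vector [flux_dtheta1 L2 psi (i$1) (i$2) th, flux_dtheta2 L2 psi (i$1) (i$2) th]) (at th)"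
    unfolding flux_axes
    by (rule derivative_eq_intros refl | simp)+
       (simp add: vec_eq_iff forall_2 axis_def flux_dtheta1_def flux_dtheta2_def algebra_simps)
qed

definition current_rate1 :: "real \<Rightarrow> real \<Rightarrow> real \<Rightarrow> real \<Rightarrow> real^2 \<Rightarrow> real^4 \<Rightarrow> real" where
  "current_rate1 L0 L2 Rs psi v x =
     ((L0 - L2 * cos (2 * x$4)) * (v$1 - Rs * x$1 - x$3 * flux_dtheta1 L2 psi (x$1) (x$2) (x$4))
      - L2 * sin (2 * x$4) * (v$2 - Rs * x$2 - x$3 * flux_dtheta2 L2 psi (x$1) (x$2) (x$4)))
     * inverse (L0\<^sup>2 - L2\<^sup>2)"

definition current_rate2 :: "real \<Rightarrow> real \<Rightarrow> real \<Rightarrow> real \<Rightarrow> real^2 \<Rightarrow> real^4 \<Rightarrow> real" where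
  "current_rate2 L0 L2 Rs psi v x =
     (- L2 * sin (2 * x$4) * (v$1 - Rs * x$1 - x$3 * flux_dtheta1 L2 psi (x$1) (x$2) (x$4))
      + (L0 + L2 * cos (2 * x$4)) * (v$2 - Rs * x$2 - x$3 * flux_dtheta2 L2 psi (x$1) (x$2) (x$4)))
     * inverse (L0\<^sup>2 - L2\<^sup>2)"

lemma fvec_explicit:
  assumes "L0\<^sup>2 - L2\<^sup>2 \<noteq> 0"
  shows "fvec L0 L2 Rs psi x v =
           vector [current_rate1 L0 L2 Rs psi v x, current_rate2 L0 L2 Rs psi v x, 0, x$3]"
  unfolding fvec_def Let_def matrix_inv_Lmat[OF assms] vector_derivative_flux
  by (simp add: stator_current_def current_rate1_def current_rate2_def Lmat_inv_def
      matrix_vector_mult_def UNIV_2 diff_divide_distrib algebra_simps divide_inverse)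

schematic_goal has_derivative_current_rate1: "(current_rate1 L0 L2 Rs psi v has_derivative ?D) (at x)"
  unfolding current_rate1_def[abs_def] flux_dtheta1_def flux_dtheta2_def by (rule derivative_intros)+

schematic_goal has_derivative_current_rate2: "(current_rate2 L0 L2 Rs psi v has_derivative ?D) (at x)"
  unfolding current_rate2_def[abs_def] flux_dtheta1_def flux_dtheta2_def by (rule derivative_intros)+

schematic_goal has_derivative_PsiOd: "(PsiOd L0 L2 psi has_derivative ?D) (at x)"
  unfolding PsiOd_def[abs_def] i_sd_def by (rule derivative_intros)+

schematic_goal has_derivative_PsiOq: "(PsiOq L0 L2 has_derivative ?D) (at x)"
  unfolding PsiOq_def[abs_def] i_sq_def by (rule derivative_intros)+

lemma lie_deriv_h_alpha:
  assumes "L0\<^sup>2 - L2\<^sup>2 \<noteq> 0"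
  shows "lie_deriv (fvec L0 L2 Rs psi) v h_alpha = current_rate1 L0 L2 Rs psi v"
  by (rule ext) (simp add: lie_deriv_def h_alpha_def[abs_def] frechet_derivative_vec_nth fvec_explicit[OF assms])

lemma lie_deriv_h_beta:
  assumes "L0\<^sup>2 - L2\<^sup>2 \<noteq> 0"
  shows "lie_deriv (fvec L0 L2 Rs psi) v h_beta = current_rate2 L0 L2 Rs psi v"
  by (rule ext) (simp add: lie_deriv_def h_beta_def[abs_def] frechet_derivative_vec_nth fvec_explicit[OF assms])

lemma lie_deriv_PsiOd:
  assumes "L0\<^sup>2 - L2\<^sup>2 \<noteq> 0"
  shows "lie_deriv (fvec L0 L2 Rs psi) v (PsiOd L0 L2 psi) x =
    (Ld L0 L2 - Lq L0 L2) * (cos (x$4) * current_rate1 L0 L2 Rs psi v x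
      + sin (x$4) * current_rate2 L0 L2 Rs psi v x + x$3 * i_sq x)"
  unfolding lie_deriv_def fvec_explicit[OF assms] frechet_derivative_at[OF has_derivative_PsiOd, symmetric]
  by (simp add: i_sq_def algebra_simps)

lemma lie_deriv_PsiOq:
  assumes "L0\<^sup>2 - L2\<^sup>2 \<noteq> 0"
  shows "lie_deriv (fvec L0 L2 Rs psi) v (PsiOq L0 L2) x =
    (Ld L0 L2 - Lq L0 L2) * (- sin (x$4) * current_rate1 L0 L2 Rs psi v x
      + cos (x$4) * current_rate2 L0 L2 Rs psi v x - x$3 * i_sd x)"
  unfolding lie_deriv_def fvec_explicit[OF assms] frechet_derivative_at[OF has_derivative_PsiOq, symmetric]
  by (simp add: i_sd_def algebra_simps)

lemma det_obs_matrix_current_rates: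
  assumes "L0\<^sup>2 - L2\<^sup>2 \<noteq> 0"
  shows "det (obs_matrix L0 L2 Rs psi v x) =
      frechet_derivative (current_rate1 L0 L2 Rs psi v) (at x) (axis 3 1)
        * frechet_derivative (current_rate2 L0 L2 Rs psi v) (at x) (axis 4 1)
    - frechet_derivative (current_rate1 L0 L2 Rs psi v) (at x) (axis 4 1)
        * frechet_derivative (current_rate2 L0 L2 Rs psi v) (at x) (axis 3 1)"
  unfolding obs_matrix_def lie_deriv_h_alpha[OF assms] lie_deriv_h_beta[OF assms]
  by (subst det_4_unit_first_rows)
     (simp_all add: grad_def h_alpha_def[abs_def] h_beta_def[abs_def] frechet_derivative_vec_nth axis_def)

text \<open>In terms of \<open>c = cos \<theta>, s = sin \<theta>\<close> and \<open>D = L\<^sub>d L\<^sub>q\<close>: \<open>F, F'\<close> are the first and second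
  \<open>\<theta>\<close>-derivatives of the flux, \<open>r\<close> is the voltage residual \<open>v - R\<^sub>s i - \<omega> F\<close> (a free variable since \<open>v\<close>
  is), and \<open>g, N, Dd, Dq\<close> are \<open>D\<close> times the current rates, their \<open>(\<omega>, \<theta>)\<close>-Jacobian and the Lie
  derivatives of \<open>\<Psi>\<^sub>O\<close>.\<close>
lemma obs_minor_polynomial_identity:
  fixes c s i1 i2 w r1 r2 p L0 L2 :: real
  assumes cs: "c\<^sup>2 + s\<^sup>2 = 1"
    and "C2 = c\<^sup>2 - s\<^sup>2" "S2 = 2 * s * c" "D = L0\<^sup>2 - L2\<^sup>2"
    and "F1 = 2 * L2 * C2 * i2 - 2 * L2 * S2 * i1 - p * s" "F2 = 2 * L2 * C2 * i1 + 2 * L2 * S2 * i2 + p * c"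
    and "F1' = -4 * L2 * S2 * i2 - 4 * L2 * C2 * i1 - p * c" "F2' = -4 * L2 * S2 * i1 + 4 * L2 * C2 * i2 - p * s"
    and "N33 = -((L0 - L2 * C2) * F1 - L2 * S2 * F2)" "N43 = -(-L2 * S2 * F1 + (L0 + L2 * C2) * F2)"
    and "N34 = 2 * L2 * S2 * r1 - 2 * L2 * C2 * r2 - w * ((L0 - L2 * C2) * F1' - L2 * S2 * F2')"
    and "N44 = -2 * L2 * C2 * r1 - 2 * L2 * S2 * r2 - w * (-L2 * S2 * F1' + (L0 + L2 * C2) * F2')"
    and "g1 = (L0 - L2 * C2) * r1 - L2 * S2 * r2" "g2 = -L2 * S2 * r1 + (L0 + L2 * C2) * r2"
    and "d = 2 * L2 * (c * i1 + s * i2) + p" "q = 2 * L2 * (-s * i1 + c * i2)"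
    and "Dd = 2 * L2 * (c * g1 - w * s * i1 * D + s * g2 + w * c * i2 * D)"
    and "Dq = 2 * L2 * (-s * g1 - w * c * i1 * D + c * g2 - w * s * i2 * D)"
  shows "N33 * N44 - N34 * N43 = D * (w * (d\<^sup>2 + q\<^sup>2)) - d * Dq + q * Dd"
  unfolding assms(2-) using cs by algebra

lemma det_obs_matrix_scaled:
  assumes "Ld L0 L2 * Lq L0 L2 \<noteq> 0"
  shows "det (obs_matrix L0 L2 Rs psi v x) * (Ld L0 L2 * Lq L0 L2) =
     x$3 * ((PsiOd L0 L2 psi x)\<^sup>2 + (PsiOq L0 L2 x)\<^sup>2)
     - PsiOd L0 L2 psi x * lie_deriv (fvec L0 L2 Rs psi) v (PsiOq L0 L2) x
     + PsiOq L0 L2 x * lie_deriv (fvec L0 L2 Rs psi) v (PsiOd L0 L2 psi) x"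
proof -
  define D where "D = L0\<^sup>2 - L2\<^sup>2"
  have DD: "L0\<^sup>2 - L2\<^sup>2 \<noteq> 0" using assms by (simp add: Ld_mult_Lq)
  define c s i1 i2 w v1 v2 where "c = cos (x$4)" and "s = sin (x$4)" and "i1 = x$1" and "i2 = x$2"
    and "w = x$3" and "v1 = v$1" and "v2 = v$2"
  define K C2 S2 where "K = inverse D" and "C2 = c\<^sup>2 - s\<^sup>2" and "S2 = 2 * s * c"
  note state = c_def s_def i1_def i2_def w_def v1_def v2_def K_def C2_def S2_def D_def
  define F1 where "F1 = 2 * L2 * C2 * i2 - 2 * L2 * S2 * i1 - psi * s"
  define F2 where "F2 = 2 * L2 * C2 * i1 + 2 * L2 * S2 * i2 + psi * c"
  define F1' where "F1' = -4 * L2 * S2 * i2 - 4 * L2 * C2 * i1 - psi * c"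
  define F2' where "F2' = -4 * L2 * S2 * i1 + 4 * L2 * C2 * i2 - psi * s"
  define r1 where "r1 = v1 - Rs * i1 - w * F1"
  define r2 where "r2 = v2 - Rs * i2 - w * F2"
  define N33 where "N33 = -((L0 - L2 * C2) * F1 - L2 * S2 * F2)"
  define N43 where "N43 = -(-L2 * S2 * F1 + (L0 + L2 * C2) * F2)"
  define N34 where "N34 = 2 * L2 * S2 * r1 - 2 * L2 * C2 * r2 - w * ((L0 - L2 * C2) * F1' - L2 * S2 * F2')"
  define N44 where "N44 = -2 * L2 * C2 * r1 - 2 * L2 * S2 * r2 - w * (-L2 * S2 * F1' + (L0 + L2 * C2) * F2')"
  define g1 where "g1 = (L0 - L2 * C2) * r1 - L2 * S2 * r2"
  define g2 where "g2 = -L2 * S2 * r1 + (L0 + L2 * C2) * r2"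
  define d where "d = 2 * L2 * (c * i1 + s * i2) + psi"
  define q where "q = 2 * L2 * (-s * i1 + c * i2)"
  define Dd where "Dd = 2 * L2 * (c * g1 - w * s * i1 * D + s * g2 + w * c * i2 * D)"
  define Dq where "Dq = 2 * L2 * (-s * g1 - w * c * i1 * D + c * g2 - w * s * i2 * D)"
  note flux = flux_dtheta1_def flux_dtheta2_def F1_def F2_def F1'_def F2'_def r1_def r2_def
  have KD: "K * D = 1" unfolding K_def D_def using DD by simp
  have minor: "N33 * N44 - N34 * N43 = D * (w * (d\<^sup>2 + q\<^sup>2)) - d * Dq + q * Dd"
    by (rule obs_minor_polynomial_identity[OF _ C2_def S2_def D_def F1_def F2_def F1'_def F2'_def
          N33_def N43_def N34_def N44_def g1_def g2_def d_def q_def Dd_def Dq_def])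
       (simp add: c_def s_def)
  have rate1_d\<omega>: "frechet_derivative (current_rate1 L0 L2 Rs psi v) (at x) (axis 3 1) = N33 * K"
    unfolding frechet_derivative_at[OF has_derivative_current_rate1, symmetric]
    by (simp add: axis_def cos_double sin_double current_rate1_def N33_def flux state algebra_simps)
  have rate1_d\<theta>: "frechet_derivative (current_rate1 L0 L2 Rs psi v) (at x) (axis 4 1) = N34 * K"
    unfolding frechet_derivative_at[OF has_derivative_current_rate1, symmetric]
    by (simp add: axis_def cos_double sin_double current_rate1_def N34_def flux state algebra_simps)
  have rate2_d\<omega>: "frechet_derivative (current_rate2 L0 L2 Rs psi v) (at x) (axis 3 1) = N43 * K"
    unfolding frechet_derivative_at[OF has_derivative_current_rate2, symmetric]
    by (simp add: axis_def cos_double sin_double current_rate2_def N43_def flux state algebra_simps)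
  have rate2_d\<theta>: "frechet_derivative (current_rate2 L0 L2 Rs psi v) (at x) (axis 4 1) = N44 * K"
    unfolding frechet_derivative_at[OF has_derivative_current_rate2, symmetric]
    by (simp add: axis_def cos_double sin_double current_rate2_def N44_def flux state algebra_simps)
  have rate1: "current_rate1 L0 L2 Rs psi v x = g1 * K"
    by (simp add: current_rate1_def g1_def flux cos_double sin_double state algebra_simps)
  have rate2: "current_rate2 L0 L2 Rs psi v x = g2 * K"
    by (simp add: current_rate2_def g2_def flux cos_double sin_double state algebra_simps)
  have KD': "\<And>y. D * (K * y) = y" using KD by (metis mult.assoc mult.commute mult_1)
  have Dd: "lie_deriv (fvec L0 L2 Rs psi) v (PsiOd L0 L2 psi) x = Dd * K"
    unfolding lie_deriv_PsiOd[OF DD] rate1 rate2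
    by (simp add: KD' Dd_def Ld_def Lq_def i_sq_def c_def s_def i1_def i2_def w_def algebra_simps)
  have Dq: "lie_deriv (fvec L0 L2 Rs psi) v (PsiOq L0 L2) x = Dq * K"
    unfolding lie_deriv_PsiOq[OF DD] rate1 rate2
    by (simp add: KD' Dq_def Ld_def Lq_def i_sd_def c_def s_def i1_def i2_def w_def algebra_simps)
  have d: "PsiOd L0 L2 psi x = d"
    by (simp add: PsiOd_def d_def Ld_def Lq_def i_sd_def c_def s_def i1_def i2_def algebra_simps)
  have q: "PsiOq L0 L2 x = q"
    by (simp add: PsiOq_def q_def Ld_def Lq_def i_sq_def c_def s_def i1_def i2_def algebra_simps)
  have "det (obs_matrix L0 L2 Rs psi v x) * D = (N33 * N44 - N34 * N43) * K * (K * D)"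
    unfolding det_obs_matrix_current_rates[OF DD] rate1_d\<omega> rate1_d\<theta> rate2_d\<omega> rate2_d\<theta> by (simp add: algebra_simps)
  also have "\<dots> = (D * (w * (d\<^sup>2 + q\<^sup>2)) - d * Dq + q * Dd) * K"
    unfolding minor KD by simp
  also have "\<dots> = w * (d\<^sup>2 + q\<^sup>2) - d * (Dq * K) + q * (Dd * K)"
    by (simp add: algebra_simps KD')
  finally show ?thesis
    unfolding Ld_mult_Lq D_def[symmetric] Dd Dq d q w_def .
qed

lemma rank_condition_from_det_identity:
  fixes De L w d q dd dq :: real
  assumes "L > 0" and det: "De * L = w * (d\<^sup>2 + q\<^sup>2) - d * dq + q * dd"
  shows "((d, q) \<noteq> (0, 0) \<longrightarrow> De = (d\<^sup>2 + q\<^sup>2) / L * (w - (d * dq - q * dd) / (d\<^sup>2 + q\<^sup>2)))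
       \<and> ((d, q) = (0, 0) \<longrightarrow> De = 0)
       \<and> (De \<noteq> 0 \<longleftrightarrow> (d, q) \<noteq> (0, 0) \<and> (d * dq - q * dd) / (d\<^sup>2 + q\<^sup>2) \<noteq> w)"
proof (cases "(d, q) = (0, 0)")
  case True
  then show ?thesis using assms by simp
next
  case False
  define \<theta>' where "\<theta>' = (d * dq - q * dd) / (d\<^sup>2 + q\<^sup>2)"
  have P: "d\<^sup>2 + q\<^sup>2 > 0" using False by (simp add: sum_power2_gt_zero_iff)
  then have "(d\<^sup>2 + q\<^sup>2) * \<theta>' = d * dq - q * dd"
    unfolding \<theta>'_def by simp
  then have "De * L = (d\<^sup>2 + q\<^sup>2) * (w - \<theta>')"
    using det by (simp add: algebra_simps)
  then have "De = (d\<^sup>2 + q\<^sup>2) / L * (w - \<theta>')"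
    using \<open>L > 0\<close> by (simp add: field_simps)
  then show ?thesis using False P \<open>L > 0\<close> unfolding \<theta>'_def[symmetric] by auto
qed

theorem proposition1:
  fixes L0 L2 Rs psi :: real and x :: "real^4" and v :: "real^2"
  assumes "Ld L0 L2 > 0" and "Lq L0 L2 > 0"
  shows "((PsiOd L0 L2 psi x, PsiOq L0 L2 x) \<noteq> (0, 0) \<longrightarrow>
           det (obs_matrix L0 L2 Rs psi v x) =
             ((PsiOd L0 L2 psi x)\<^sup>2 + (PsiOq L0 L2 x)\<^sup>2) / (Ld L0 L2 * Lq L0 L2)
             * (x$3 - dthetaO L0 L2 Rs psi v x))
       \<and> ((PsiOd L0 L2 psi x, PsiOq L0 L2 x) = (0, 0) \<longrightarrow>
           det (obs_matrix L0 L2 Rs psi v x) = 0)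
       \<and> (det (obs_matrix L0 L2 Rs psi v x) \<noteq> 0 \<longleftrightarrow>
           (PsiOd L0 L2 psi x, PsiOq L0 L2 x) \<noteq> (0, 0) \<and> dthetaO L0 L2 Rs psi v x \<noteq> x$3)"
proof -
  have L: "Ld L0 L2 * Lq L0 L2 > 0" using assms by simp
  have "Ld L0 L2 * Lq L0 L2 \<noteq> 0" using assms by simp
  from L det_obs_matrix_scaled[OF this, of Rs psi v x] show ?thesis
    unfolding dthetaO_def Let_def by (rule rank_condition_from_det_identity)
qed

end
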